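(* The identity map on generators induces algebra isomorphisms $U^{22}_{K,L,norm}\cong U^{31}_{K,L,norm}$ and $U^{22}_{K,L,twist}\cong U^{31}_{K,L,twist}$.
   Context: Fix $q\in\mathbb{C}$, $q\neq0,\pm1$. $U^{22}_{K+L}$ is the unital associative $\mathbb{C}$-algebra generated by $K,\overline{K},L,\overline{L},E,F$ subject to: $K\overline{K}K=K$, $\overline{K}K\overline{K}=\overline{K}$, $K\overline{K}=\overline{K}K$, $L\overline{L}L=L$, $\overline{L}L\overline{L}=\overline{L}$, $L\overline{L}=\overline{L}L$, $K\overline{K}+L\overline{L}=\mathbf{1}$, and, writing $\mathcal{K}=K+L$, $\overline{\mathcal{K}}=\overline{K}+\overline{L}$: $\mathcal{K}E=q^2E\mathcal{K}$, $\overline{\mathcal{K}}E=q^{-2}E\overline{\mathcal{K}}$, $\mathcal{K}F=q^{-2}F\mathcal{K}$, $\overline{\mathcal{K}}F=q^{2}F\overline{\mathcal{K}}$, $EF-FE=(\mathcal{K}-\overline{\mathcal{K}})/(q-q^{-1})$. $U^{31}_{K+L}$ has the same generators and first seven relations together with $\mathcal{K}E\overline{\mathcal{K}}=q^2E$, $\overline{\mathcal{K}}E\mathcal{K}=q^{-2}E$, $\mathcal{K}F\overline{\mathcal{K}}=q^{-2}F$, $\overline{\mathcal{K}}F\mathcal{K}=q^{2}F$, $EF-FE=(\mathcal{K}-\overline{\mathcal{K}})/(q-q^{-1})$. Let $P=K\overline{K}$, $Q=L\overline{L}$. For $s\in\{22,31\}$, $U^{s}_{K,L,norm}$ is the quotient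 of $U^{s}_{K+L}$ by the two-sided ideal generated by $PE-EP$, $QE-EQ$, $PF-FP$, $QF-FQ$, and $U^{s}_{K,L,twist}$ is the quotient of $U^{s}_{K+L}$ by the two-sided ideal generated by $PE-EQ$, $QE-EP$, $PF-FQ$, $QF-FP$. *)

theory Defs
  imports Complex_Main
begin

text \<open>A unital associative complex algebra is a ring with unit together with a
  unital ring homomorphism from the complex numbers into its centre (scalars).\<close>
definition calg_struct :: "(complex \<Rightarrow> 'a::ring_1) \<Rightarrow> bool" where
  "calg_struct s \<longleftrightarrow> (\<forall>a b. s (a + b) = s a + s b) \<and> (\<forall>a b. s (a * b) = s a * s b)
     \<and> s 1 = 1 \<and> (\<forall>a x. s a * x = x * s a)"

definition base_rels :: "'a::ring_1 \<Rightarrow> 'a \<Rightarrow> 'a \<Rightarrow> 'a \<Rightarrow> bool" where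
  "base_rels K Kb L Lb \<longleftrightarrow>
     K * Kb * K = K \<and> Kb * K * Kb = Kb \<and> K * Kb = Kb * K \<and>
     L * Lb * L = L \<and> Lb * L * Lb = Lb \<and> L * Lb = Lb * L \<and>
     K * Kb + L * Lb = 1"

definition rels22 :: "(complex \<Rightarrow> 'a::ring_1) \<Rightarrow> complex \<Rightarrow> 'a \<Rightarrow> 'a \<Rightarrow> 'a \<Rightarrow> 'a \<Rightarrow> 'a \<Rightarrow> 'a \<Rightarrow> bool" where
  "rels22 s q K Kb L Lb E F \<longleftrightarrow> base_rels K Kb L Lb \<and>
     (let C = K + L; Cb = Kb + Lb in
       C * E = s (q^2) * E * C \<and> Cb * E = s (inverse q ^ 2) * E * Cb \<and>
       C * F = s (inverse q ^ 2) * F * C \<and> Cb * F = s (q^2) * F * Cb \<and>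
       E * F - F * E = s (inverse (q - inverse q)) * (C - Cb))"

definition rels31 :: "(complex \<Rightarrow> 'a::ring_1) \<Rightarrow> complex \<Rightarrow> 'a \<Rightarrow> 'a \<Rightarrow> 'a \<Rightarrow> 'a \<Rightarrow> 'a \<Rightarrow> 'a \<Rightarrow> bool" where
  "rels31 s q K Kb L Lb E F \<longleftrightarrow> base_rels K Kb L Lb \<and>
     (let C = K + L; Cb = Kb + Lb in
       C * E * Cb = s (q^2) * E \<and> Cb * E * C = s (inverse q ^ 2) * E \<and>
       C * F * Cb = s (inverse q ^ 2) * F \<and> Cb * F * C = s (q^2) * F \<and>
       E * F - F * E = s (inverse (q - inverse q)) * (C - Cb))"

definition norm_rels :: "'a::ring_1 \<Rightarrow> 'a \<Rightarrow> 'a \<Rightarrow> 'a \<Rightarrow> 'a \<Rightarrow> 'a \<Rightarrow> bool" where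
  "norm_rels K Kb L Lb E F \<longleftrightarrow>
     (let P = K * Kb; Q = L * Lb in
       P * E = E * P \<and> Q * E = E * Q \<and> P * F = F * P \<and> Q * F = F * Q)"

definition twist_rels :: "'a::ring_1 \<Rightarrow> 'a \<Rightarrow> 'a \<Rightarrow> 'a \<Rightarrow> 'a \<Rightarrow> 'a \<Rightarrow> bool" where
  "twist_rels K Kb L Lb E F \<longleftrightarrow>
     (let P = K * Kb; Q = L * Lb in
       P * E = E * Q \<and> Q * E = E * P \<and> P * F = F * Q \<and> Q * F = F * P)"

end

theory Submission
  imports Defs
begin

text \<open>The relations K Kbar K = K, Kbar K Kbar = Kbar, K Kbar = Kbar K make P = K Kbar and
  Q = L Lbar idempotents acting as units on K, Kbar resp. L, Lbar; since P + Q = 1 they are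
  orthogonal, so all cross terms vanish and K + L is invertible with inverse Kbar + Lbar.
  Conjugation by an invertible element turns C X = c X C into C X Cbar = c X, so the
  relations of U^{22} and U^{31} are equivalent already before passing to either quotient,
  in any ring and for any q and scalar map.\<close>

lemma complementary_idempotents_orthogonal:
  fixes P Q :: "'a::ring_1"
  assumes "P * P = P" and "P + Q = 1"
  shows "P * Q = 0" and "Q * P = 0"
proof -
  have Q: "Q = 1 - P" using assms(2) by (metis add_diff_cancel_left')
  show "P * Q = 0" "Q * P = 0" using assms(1) by (simp_all add: Q algebra_simps)
qed

lemma von_neumann_pair_absorbs:
  fixes K Kb :: "'a::ring_1"
  assumes "K * Kb * K = K" and "Kb * K * Kb = Kb" and "K * Kb = Kb * K"
  shows "(K * Kb) * (K * Kb) = K * Kb"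
    and "K * (K * Kb) = K" and "K * Kb * K = K"
    and "Kb * (K * Kb) = Kb" and "K * Kb * Kb = Kb"
  using assms by (metis mult.assoc)+

lemma base_rels_sum_invertible:
  fixes K Kb L Lb :: "'a::ring_1"
  assumes "base_rels K Kb L Lb"
  shows "(K + L) * (Kb + Lb) = 1" and "(Kb + Lb) * (K + L) = 1"
proof -
  have K: "K * Kb * K = K" "Kb * K * Kb = Kb" "K * Kb = Kb * K"
    and L: "L * Lb * L = L" "Lb * L * Lb = Lb" "L * Lb = Lb * L"
    and PQ: "K * Kb + L * Lb = 1"
    using assms unfolding base_rels_def by auto
  note P = von_neumann_pair_absorbs[OF K] and Q = von_neumann_pair_absorbs[OF L]
  have orth: "K * Kb * (L * Lb) = 0" "L * Lb * (K * Kb) = 0"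
    using complementary_idempotents_orthogonal[OF P(1) PQ] by simp_all
  have "K * Lb = K * (K * Kb) * (L * Lb * Lb)" using P(2) Q(5) by simp
  also have "\<dots> = K * (K * Kb * (L * Lb)) * Lb" by (simp add: mult.assoc)
  finally have KLb: "K * Lb = 0" using orth by simp
  have "L * Kb = L * (L * Lb) * (K * Kb * Kb)" using Q(2) P(5) by simp
  also have "\<dots> = L * (L * Lb * (K * Kb)) * Kb" by (simp add: mult.assoc)
  finally have LKb: "L * Kb = 0" using orth by simp
  have "Kb * L = Kb * (K * Kb) * (L * Lb * L)" using P(4) Q(3) by simp
  also have "\<dots> = Kb * (K * Kb * (L * Lb)) * L" by (simp add: mult.assoc)
  finally have KbL: "Kb * L = 0" using orth by simp
  have "Lb * K = Lb * (L * Lb) * (K * Kb * K)" using Q(4) P(3) by simp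
  also have "\<dots> = Lb * (L * Lb * (K * Kb)) * K" by (simp add: mult.assoc)
  finally have LbK: "Lb * K = 0" using orth by simp
  show "(K + L) * (Kb + Lb) = 1"
    using KLb LKb PQ by (simp add: algebra_simps)
  show "(Kb + Lb) * (K + L) = 1"
    using KbL LbK PQ K(3) L(3) by (simp add: algebra_simps)
qed

lemma twisted_commute_iff_conjugate:
  fixes C Cb X Y :: "'a::ring_1"
  assumes "C * Cb = 1" and "Cb * C = 1"
  shows "C * X = Y * C \<longleftrightarrow> C * X * Cb = Y"
proof
  assume "C * X = Y * C"
  then have "C * X * Cb = Y * (C * Cb)" by (simp add: mult.assoc)
  then show "C * X * Cb = Y" using assms(1) by simp
next
  assume "C * X * Cb = Y"
  then have "Y * C = C * X * (Cb * C)" by (metis mult.assoc)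
  then show "C * X = Y * C" using assms(2) by simp
qed

lemma rels22_iff_rels31:
  "rels22 s q K Kb L Lb E F \<longleftrightarrow> rels31 s q K Kb L Lb E F"
proof (cases "base_rels K Kb L Lb")
  case True
  note inv = base_rels_sum_invertible[OF True]
  note conj = twisted_commute_iff_conjugate[OF inv] twisted_commute_iff_conjugate[OF inv(2,1)]
  show ?thesis
    unfolding rels22_def rels31_def Let_def conj by (rule refl)
qed (simp add: rels22_def rels31_def)

theorem proposition3:
  fixes q :: complex and s :: "complex \<Rightarrow> 'a::ring_1"
    and K Kb L Lb E F :: 'a
  assumes "q \<noteq> 0" and "q \<noteq> 1" and "q \<noteq> -1" and "calg_struct s"
  shows "(rels22 s q K Kb L Lb E F \<and> norm_rels K Kb L Lb E F \<longleftrightarrow>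
          rels31 s q K Kb L Lb E F \<and> norm_rels K Kb L Lb E F) \<and>
         (rels22 s q K Kb L Lb E F \<and> twist_rels K Kb L Lb E F \<longleftrightarrow>
          rels31 s q K Kb L Lb E F \<and> twist_rels K Kb L Lb E F)"
  using rels22_iff_rels31[of s q K Kb L Lb E F] by blast

end
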